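(* Let $\varepsilon>0$ and $\mathcal{K}_\varepsilon=\{x\in\mathbb{R}^{|\mathcal{A}|}:x_i+\varepsilon\le x_{i+1}\text{ for }i=1,\dots,|\mathcal{A}|-1\}$. Consider the modification of MultiQT in which the forecast is $q_t=\Pi_{\mathcal{K}_\varepsilon}(b_t+\tilde\theta_t)$ and the hidden offsets are updated by $\tilde\theta_{t+1}^{\alpha}=\tilde\theta_t^{\alpha}-\eta(\mathbb{1}\{y_t\le q_t^{\alpha}\}-\alpha)$ for each $\alpha\in\mathcal{A}$. There exist a set of levels $\mathcal{A}$ and a sequence $(y_t,b_t)$ with $|y_t-b_t^{\alpha}|<R$ for all $\alpha,t$ (for some $R>0$) such that for some $\alpha\in\mathcal{A}$, $\lim_{T\to\infty}\frac1T\sum_{t=1}^T\mathbb{1}\{y_t\le q_t^{\alpha}\}\ne\alpha$.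
   Context: $\mathcal{A}=\{\alpha_1<\dots<\alpha_m\}\subset(0,1)$ is a set of quantile levels, $\eta>0$ a learning rate, base forecasts $b_t$ have nondecreasing entries, and $\Pi_C$ denotes Euclidean projection onto a closed convex set $C$. *)

theory Defs
  imports "HOL-Analysis.Analysis"
begin

(* Vectors in R^m are represented as functions nat => real; only indices i < m matter.
   Index i (0-based) corresponds to the level alpha_{i+1}. *)

definition Keps :: "real \<Rightarrow> nat \<Rightarrow> (nat \<Rightarrow> real) set" where
  "Keps \<epsilon> m = {z. (\<forall>i. Suc i < m \<longrightarrow> z i + \<epsilon> \<le> z (Suc i)) \<and> (\<forall>i. m \<le> i \<longrightarrow> z i = 0)}"

definition sqdist :: "nat \<Rightarrow> (nat \<Rightarrow> real) \<Rightarrow> (nat \<Rightarrow> real) \<Rightarrow> real" where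
  "sqdist m x z = (\<Sum>i<m. (x i - z i)^2)"

(* Euclidean projection onto K_eps (a nonempty closed convex subset of R^m) *)
definition projK :: "real \<Rightarrow> nat \<Rightarrow> (nat \<Rightarrow> real) \<Rightarrow> (nat \<Rightarrow> real)" where
  "projK \<epsilon> m x = (THE z. z \<in> Keps \<epsilon> m \<and> (\<forall>w\<in>Keps \<epsilon> m. sqdist m x z \<le> sqdist m x w))"

(* hidden offsets of the modified MultiQT, initialised at 0;
   mqt_theta eps eta m alpha y b t  is  theta_{t+1} (time shifted to start at 0) *)
primrec mqt_theta :: "real \<Rightarrow> real \<Rightarrow> nat \<Rightarrow> (nat \<Rightarrow> real) \<Rightarrow> (nat \<Rightarrow> real)
    \<Rightarrow> (nat \<Rightarrow> nat \<Rightarrow> real) \<Rightarrow> nat \<Rightarrow> (nat \<Rightarrow> real)" where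
  "mqt_theta \<epsilon> \<eta> m \<alpha> y b 0 = (\<lambda>i. 0)"
| "mqt_theta \<epsilon> \<eta> m \<alpha> y b (Suc t) =
     (let q = projK \<epsilon> m (\<lambda>i. b t i + mqt_theta \<epsilon> \<eta> m \<alpha> y b t i)
      in (\<lambda>i. mqt_theta \<epsilon> \<eta> m \<alpha> y b t i
               - \<eta> * ((if y t \<le> q i then 1 else 0) - \<alpha> i)))"

definition mqt_q :: "real \<Rightarrow> real \<Rightarrow> nat \<Rightarrow> (nat \<Rightarrow> real) \<Rightarrow> (nat \<Rightarrow> real)
    \<Rightarrow> (nat \<Rightarrow> nat \<Rightarrow> real) \<Rightarrow> nat \<Rightarrow> (nat \<Rightarrow> real)" where
  "mqt_q \<epsilon> \<eta> m \<alpha> y b t = projK \<epsilon> m (\<lambda>i. b t i + mqt_theta \<epsilon> \<eta> m \<alpha> y b t i)"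

end

theory Submission
  imports Defs
begin

text \<open>Take two levels \<open>1/4 < 3/4\<close>, observations \<open>y\<^sub>t = 0\<close> and base forecasts \<open>b\<^sub>t = 0\<close>.
  The observation always lies strictly between the two projected forecasts, so the lower offset
  grows by \<open>\<eta>/4\<close> and the upper one shrinks by \<open>\<eta>/4\<close> in every round: the hidden offsets cross.
  Once \<open>\<theta>\<^sup>1 \<le> \<theta>\<^sup>0 + \<epsilon>\<close>, the projection onto \<open>K\<^sub>\<epsilon>\<close> only sees the midpoint \<open>(\<theta>\<^sup>0 + \<theta>\<^sup>1)/2 = 0\<close>
  and returns \<open>(-\<epsilon>/2, \<epsilon>/2)\<close> forever, so the lower level is never covered.\<close>

lemma projK_eqI:
  assumes "z \<in> Keps \<epsilon> m"
    and "\<And>w. w \<in> Keps \<epsilon> m \<Longrightarrow> w \<noteq> z \<Longrightarrow> sqdist m x z < sqdist m x w"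
  shows "projK \<epsilon> m x = z"
  unfolding projK_def
proof (rule the_equality)
  show "z \<in> Keps \<epsilon> m \<and> (\<forall>w\<in>Keps \<epsilon> m. sqdist m x z \<le> sqdist m x w)"
    using assms by (metis order.order_iff_strict)
next
  fix w assume "w \<in> Keps \<epsilon> m \<and> (\<forall>v\<in>Keps \<epsilon> m. sqdist m x w \<le> sqdist m x v)"
  then show "w = z"
    using assms by (meson not_less)
qed

lemma sqdist_2: "sqdist 2 x z = (x 0 - z 0)\<^sup>2 + (x 1 - z 1)\<^sup>2"
  by (simp add: sqdist_def numeral_2_eq_2)

lemma projK_2_midpoint:
  assumes "x 1 \<le> x 0 + \<epsilon>"
  shows "projK \<epsilon> 2 x =
    (\<lambda>i. if i = 0 then (x 0 + x 1) / 2 - \<epsilon> / 2 else if i = 1 then (x 0 + x 1) / 2 + \<epsilon> / 2 else 0)"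
    (is "_ = ?z")
proof (rule projK_eqI)
  show "?z \<in> Keps \<epsilon> 2"
    unfolding Keps_def by auto
  define g where "g = \<epsilon> - (x 1 - x 0)"
  have "g \<ge> 0"
    using assms by (simp add: g_def)
  fix w assume w: "w \<in> Keps \<epsilon> 2" "w \<noteq> ?z"
  define u where "u = x 0 - w 0"
  define v where "v = w 1 - x 1"
  have "u + v \<ge> g"
    using w(1) by (simp add: Keps_def u_def v_def g_def)
  have dist_z: "sqdist 2 x ?z = g\<^sup>2 / 2"
    by (simp add: sqdist_2 g_def power2_eq_square field_simps)
  have dist_w: "sqdist 2 x w = ((u + v)\<^sup>2 + (u - v)\<^sup>2) / 2"
    by (simp add: sqdist_2 u_def v_def power2_eq_square field_simps)
  have "g\<^sup>2 < (u + v)\<^sup>2 + (u - v)\<^sup>2"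
  proof (cases "u + v = g")
    case True
    have "w 0 \<noteq> ?z 0 \<or> w 1 \<noteq> ?z 1"
    proof (rule ccontr)
      assume "\<not> (w 0 \<noteq> ?z 0 \<or> w 1 \<noteq> ?z 1)"
      then have "w i = ?z i" for i
        using w(1) by (cases "i < 2") (auto simp: Keps_def less_2_cases_iff)
      then show False
        using w(2) by blast
    qed
    then have "u \<noteq> v"
      using True by (auto simp: u_def v_def g_def field_simps)
    then show ?thesis
      using True by simp
  next
    case False
    then have "g\<^sup>2 < (u + v)\<^sup>2"
      using \<open>g \<ge> 0\<close> \<open>u + v \<ge> g\<close> by (intro power_strict_mono) auto
    then show ?thesis
      using zero_le_power2[of "u - v"] by linarith
  qed
  then show "sqdist 2 x ?z < sqdist 2 x w"
    unfolding dist_z dist_w by (simp add: divide_strict_right_mono)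
qed

lemma mqt_theta_Suc_eq:
  "mqt_theta \<epsilon> \<eta> m \<alpha> y b (Suc t) i =
     mqt_theta \<epsilon> \<eta> m \<alpha> y b t i - \<eta> * ((if y t \<le> mqt_q \<epsilon> \<eta> m \<alpha> y b t i then 1 else 0) - \<alpha> i)"
  by (simp add: mqt_q_def Let_def)

definition levels :: "nat \<Rightarrow> real" where
  "levels i = (if i = 0 then 1/4 else 3/4)"

lemma levels_simps: "levels 0 = 1/4" "i \<noteq> 0 \<Longrightarrow> levels i = 3/4"
  by (simp_all add: levels_def)

abbreviation stuck_forecast :: "real \<Rightarrow> nat \<Rightarrow> real" where
  "stuck_forecast \<epsilon> \<equiv> (\<lambda>i. if i = 0 then - \<epsilon> / 2 else if i = 1 then \<epsilon> / 2 else 0)"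

lemma mqt_q_of_opposite_offsets:
  assumes "\<epsilon> \<ge> 0" and "c \<ge> 0" and "\<And>i. mqt_theta \<epsilon> \<eta> 2 \<alpha> y (\<lambda>_ _. 0) t i = (if i = 0 then c else - c)"
  shows "mqt_q \<epsilon> \<eta> 2 \<alpha> y (\<lambda>_ _. 0) t = stuck_forecast \<epsilon>"
  using assms unfolding mqt_q_def by (subst projK_2_midpoint) auto

lemma mqt_theta_levels:
  assumes "\<epsilon> > 0" and "\<eta> \<ge> 0"
  shows "mqt_theta \<epsilon> \<eta> 2 levels (\<lambda>_. 0) (\<lambda>_ _. 0) t i = (if i = 0 then real t * \<eta> / 4 else - (real t * \<eta> / 4))"
proof (induction t arbitrary: i)
  case 0
  then show ?case by simp
next
  case (Suc t)
  have "mqt_q \<epsilon> \<eta> 2 levels (\<lambda>_. 0) (\<lambda>_ _. 0) t = stuck_forecast \<epsilon>"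
    using assms Suc.IH by (intro mqt_q_of_opposite_offsets) auto
  then show ?case
    using assms Suc.IH[of i] unfolding mqt_theta_Suc_eq by (simp add: levels_simps field_simps)
qed

lemma mqt_q_levels:
  assumes "\<epsilon> > 0" and "\<eta> \<ge> 0"
  shows "mqt_q \<epsilon> \<eta> 2 levels (\<lambda>_. 0) (\<lambda>_ _. 0) t = stuck_forecast \<epsilon>"
  using assms by (intro mqt_q_of_opposite_offsets[where c = "real t * \<eta> / 4"]) (auto simp: mqt_theta_levels)

theorem proposition14:
  fixes \<epsilon> \<eta> :: real
  assumes "\<epsilon> > 0" and "\<eta> > 0"
  shows "\<exists>(m::nat) (\<alpha>::nat \<Rightarrow> real) (y::nat \<Rightarrow> real) (b::nat \<Rightarrow> nat \<Rightarrow> real) (R::real).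
           m \<ge> 1 \<and>
           (\<forall>i<m. 0 < \<alpha> i \<and> \<alpha> i < 1) \<and>
           (\<forall>i. Suc i < m \<longrightarrow> \<alpha> i < \<alpha> (Suc i)) \<and>
           (\<forall>t i. Suc i < m \<longrightarrow> b t i \<le> b t (Suc i)) \<and>
           R > 0 \<and> (\<forall>t. \<forall>i<m. \<bar>y t - b t i\<bar> < R) \<and>
           (\<exists>i<m. \<not> ((\<lambda>T. (\<Sum>t<T. if y t \<le> mqt_q \<epsilon> \<eta> m \<alpha> y b t i then 1 else 0) / real T)
                         \<longlonglongrightarrow> \<alpha> i))"
proof -
  have "(\<lambda>T. (\<Sum>t<T. if (0::real) \<le> mqt_q \<epsilon> \<eta> 2 levels (\<lambda>_. 0) (\<lambda>_ _. 0) t 0 then 1 else 0) / real T)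
        = (\<lambda>T. 0 :: real)"
    using assms by (simp add: mqt_q_levels)
  then have "\<not> (\<lambda>T. (\<Sum>t<T. if (0::real) \<le> mqt_q \<epsilon> \<eta> 2 levels (\<lambda>_. 0) (\<lambda>_ _. 0) t 0 then 1 else 0) / real T)
              \<longlonglongrightarrow> levels 0"
    by (simp add: LIMSEQ_const_iff levels_def)
  then show ?thesis
    by (intro exI[of _ 2] exI[of _ levels] exI[of _ "\<lambda>_. 0"] exI[of _ "\<lambda>_ _. 0"] exI[of _ 1])
       (auto simp: levels_def)
qed

end
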